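(* Let $G=(V,E)$ be a finite graph, $\psi\in C^1((0,\infty))$ and $d>0$. The following are equivalent: (1) $G$ satisfies the $CD\psi(d,0)$ inequality. (2) For every positive solution $u$ to the heat equation on $G$ and all $t\ge 0$, \[ \mathcal{L}\left(-u\,\Delta^\psi u\right)\ \ge\ \frac{2}{d}\,u\,\left(\Delta^\psi u\right)^2 . \]
   Context: A finite graph $G=(V,E)$ consists of a finite set $V$ and an irreflexive symmetric relation $E\subset V\times V$; write $v\sim w$ if $(v,w)\in E$. $C(V)$ denotes real functions on $V$, $C^+(V)$ the positive ones. Laplacian: $\Delta f(v)=\sum_{w\sim v}(f(w)-f(v))$. For $\psi\in C^1((0,\infty))$, $f\in C^+(V)$: $(\Delta^\psi f)(v):=\Delta\big[\psi\big(\tfrac{f}{f(v)}\big)\big](v)$; $(\Omega^\psi f)(v):=\Delta\Big[\psi'\big(\tfrac{f}{f(v)}\big)\cdot\tfrac{f}{f(v)}\cdot\big(\tfrac{\Delta f}{f}-\tfrac{(\Delta f)(v)}{f(v)}\big)\Big](v)$; $2\Gamma_2^\psi(f):=\Omega^\psi f+\frac{\Delta f\,\Delta^\psi f}{f}-\frac{\Delta(f\,\Delta^\psi f)}{f}$. $G$ satisfies $CD\psi(d,0)$ if $\Gamma_2^\psi(f)\ge\frac1d(\Delta^\psi f)^2$ pointwise for all $f\in C^+(V)$. The heat operator is $\mathcal{L}(u)=\Delta u-\partial_t u$; a solution to the heat equation on $G$ is a function $u:V\times[0,\infty)\to\mathbb{R}$, continuously differentiable in $t$, with $\mathcal{L}(u)=0$.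 Operators $\Delta^\psi,\Gamma_2^\psi$ applied to $u$ act on $u(\cdot,t)$ for each fixed $t$. *)

theory Defs
  imports "HOL-Analysis.Analysis"
begin

definition finite_graph :: "'a set \<Rightarrow> ('a \<Rightarrow> 'a \<Rightarrow> bool) \<Rightarrow> bool" where
  "finite_graph V E \<longleftrightarrow> finite V \<and> (\<forall>v w. E v w \<longrightarrow> v \<in> V \<and> w \<in> V)
     \<and> (\<forall>v. \<not> E v v) \<and> (\<forall>v w. E v w \<longrightarrow> E w v)"

definition lap :: "'a set \<Rightarrow> ('a \<Rightarrow> 'a \<Rightarrow> bool) \<Rightarrow> ('a \<Rightarrow> real) \<Rightarrow> 'a \<Rightarrow> real" where
  "lap V E f v = (\<Sum>w\<in>{w\<in>V. E v w}. f w - f v)"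

definition lap_psi :: "'a set \<Rightarrow> ('a \<Rightarrow> 'a \<Rightarrow> bool) \<Rightarrow> (real \<Rightarrow> real) \<Rightarrow> ('a \<Rightarrow> real) \<Rightarrow> 'a \<Rightarrow> real" where
  "lap_psi V E psi f v = lap V E (\<lambda>w. psi (f w / f v)) v"

definition Omega_psi :: "'a set \<Rightarrow> ('a \<Rightarrow> 'a \<Rightarrow> bool) \<Rightarrow> (real \<Rightarrow> real) \<Rightarrow> ('a \<Rightarrow> real) \<Rightarrow> 'a \<Rightarrow> real" where
  "Omega_psi V E psi f v = lap V E (\<lambda>w. deriv psi (f w / f v) * (f w / f v)
       * (lap V E f w / f w - lap V E f v / f v)) v"

definition Gamma2_psi :: "'a set \<Rightarrow> ('a \<Rightarrow> 'a \<Rightarrow> bool) \<Rightarrow> (real \<Rightarrow> real) \<Rightarrow> ('a \<Rightarrow> real) \<Rightarrow> 'a \<Rightarrow> real" where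
  "Gamma2_psi V E psi f v = (Omega_psi V E psi f v
       + lap V E f v * lap_psi V E psi f v / f v
       - lap V E (\<lambda>w. f w * lap_psi V E psi f w) v / f v) / 2"

definition CD_psi :: "'a set \<Rightarrow> ('a \<Rightarrow> 'a \<Rightarrow> bool) \<Rightarrow> (real \<Rightarrow> real) \<Rightarrow> real \<Rightarrow> bool" where
  "CD_psi V E psi d \<longleftrightarrow> (\<forall>f. (\<forall>v\<in>V. f v > 0) \<longrightarrow>
      (\<forall>v\<in>V. Gamma2_psi V E psi f v \<ge> (lap_psi V E psi f v)\<^sup>2 / d))"

definition dt :: "('a \<Rightarrow> real \<Rightarrow> real) \<Rightarrow> 'a \<Rightarrow> real \<Rightarrow> real" where
  "dt u v t = vector_derivative (u v) (at t within {0..})"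

definition heat_op :: "'a set \<Rightarrow> ('a \<Rightarrow> 'a \<Rightarrow> bool) \<Rightarrow> ('a \<Rightarrow> real \<Rightarrow> real) \<Rightarrow> 'a \<Rightarrow> real \<Rightarrow> real" where
  "heat_op V E w v t = lap V E (\<lambda>x. w x t) v - dt w v t"

definition heat_solution :: "'a set \<Rightarrow> ('a \<Rightarrow> 'a \<Rightarrow> bool) \<Rightarrow> ('a \<Rightarrow> real \<Rightarrow> real) \<Rightarrow> bool" where
  "heat_solution V E u \<longleftrightarrow> (\<forall>v\<in>V.
      (\<forall>t\<ge>0. (u v has_real_derivative dt u v t) (at t within {0..}))
      \<and> continuous_on {0..} (dt u v)
      \<and> (\<forall>t\<ge>0. heat_op V E u v t = 0))"

end

theory Submission
  imports Defs
begin

text \<open>Along a positive solution u of the heat equation the chain rule gives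
  d/dt (u w / u v) = (u w / u v) (\<Delta>u w / u w - \<Delta>u v / u v), so d/dt \<Delta>^\<psi> u = \<Omega>^\<psi> u, and the
  product rule turns this into the identity L(-u \<Delta>^\<psi> u) = 2 u \<Gamma>2^\<psi>(u). Hence CD\<psi>(d,0) gives the
  inequality pointwise; conversely, evaluating the inequality at t = 0 on the heat flow started at an
  arbitrary positive f recovers CD\<psi>(d,0) at f. That flow stays positive because
  exp(t\<Delta>) = exp(-kt) exp(t(\<Delta> + k)), and for k \<ge> |V| the operator \<Delta> + k preserves nonnegativity.\<close>

lemma at_within_atLeast_nontrivial: "(t::real) \<ge> 0 \<Longrightarrow> at t within {0..} \<noteq> bot"
proof -
  assume "t \<ge> 0"
  then have "t islimpt {0..t+1}" by simp
  then have "t islimpt {0::real..}" by (rule islimpt_subset) auto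
  then show ?thesis by (simp add: trivial_limit_within)
qed

lemma dt_eqI:
  assumes "(u v has_real_derivative D) (at t within {0..})" "t \<ge> 0"
  shows "dt u v t = D"
  unfolding dt_def
  by (rule vector_derivative_within[OF at_within_atLeast_nontrivial[OF assms(2)]])
     (use assms(1) in \<open>simp add: has_real_derivative_iff_has_vector_derivative\<close>)

lemma heat_solution_has_derivative:
  assumes "heat_solution V E u" "v \<in> V" "t \<ge> 0"
  shows "(u v has_real_derivative lap V E (\<lambda>y. u y t) v) (at t within {0..})"
proof -
  have "(u v has_real_derivative dt u v t) (at t within {0..})" "heat_op V E u v t = 0"
    using assms unfolding heat_solution_def by auto
  then show ?thesis unfolding heat_op_def by simp
qed

lemma lap_uminus: "lap V E (\<lambda>x. - g x) v = - lap V E g v"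
  unfolding lap_def by (simp add: sum_negf[symmetric])

lemma lap_cmult: "lap V E (\<lambda>w. c * g w) v = c * lap V E g v"
  unfolding lap_def by (simp add: sum_distrib_left algebra_simps)

lemma lap_eq_sum_minus_degree:
  "lap V E g v = (\<Sum>w\<in>{w\<in>V. E v w}. g w) - real (card {w\<in>V. E v w}) * g v"
  unfolding lap_def by (simp add: sum_subtractf)

lemma lap_abs_le:
  assumes "finite V" "\<forall>w\<in>V. \<bar>g w\<bar> \<le> B" "v \<in> V"
  shows "\<bar>lap V E g v\<bar> \<le> 2 * real (card V) * B"
proof -
  let ?N = "{w\<in>V. E v w}"
  have "B \<ge> 0" using assms by force
  have "\<bar>lap V E g v\<bar> \<le> (\<Sum>w\<in>?N. \<bar>g w - g v\<bar>)" unfolding lap_def by (rule sum_abs)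
  also have "\<dots> \<le> (\<Sum>w\<in>?N. 2 * B)"
  proof (rule sum_mono)
    fix w assume "w \<in> ?N"
    then have "\<bar>g w\<bar> \<le> B" "\<bar>g v\<bar> \<le> B" using assms by auto
    then show "\<bar>g w - g v\<bar> \<le> 2 * B" by linarith
  qed
  also have "\<dots> \<le> real (card V) * (2 * B)"
    using \<open>B \<ge> 0\<close> assms(1) by (simp, intro mult_right_mono) (auto intro: card_mono)
  finally show ?thesis by simp
qed

lemma lap_sums:
  assumes "\<And>w. w \<in> V \<Longrightarrow> (\<lambda>n. F n w) sums (G w)" "v \<in> V"
  shows "(\<lambda>n. lap V E (F n) v) sums (lap V E G v)"
  unfolding lap_def by (rule sums_sum, rule sums_diff) (use assms in auto)

lemma lap_psi_has_derivative_Omega_psi: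
  assumes psi: "\<forall>x>0. psi differentiable (at x)"
    and u: "heat_solution V E u" "\<forall>v\<in>V. \<forall>t\<ge>0. u v t > 0"
    and t: "t \<ge> 0" and v: "v \<in> V"
  shows "((\<lambda>s. lap_psi V E psi (\<lambda>y. u y s) v) has_real_derivative
           Omega_psi V E psi (\<lambda>y. u y t) v) (at t within {0..})"
proof -
  define L where "L w = lap V E (\<lambda>y. u y t) w" for w
  define q where "q w = u w t / u v t" for w
  define q' where "q' w = q w * (L w / u w t - L v / u v t)" for w
  have dpsi: "((\<lambda>s. psi (u w s / u v s)) has_real_derivative deriv psi (q w) * q' w)
          (at t within {0..})" if w: "w \<in> V" for w
  proof (rule DERIV_chain2[where f = psi and g = "\<lambda>s. u w s / u v s"])
    have "u w t > 0" "u v t > 0" using u(2) w v t by auto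
    then have "q' w = (L w * u v t - u w t * L v) / (u v t * u v t)"
      by (simp add: q'_def q_def field_simps)
    then show "((\<lambda>s. u w s / u v s) has_real_derivative q' w) (at t within {0..})"
      using DERIV_divide[OF heat_solution_has_derivative[OF u(1) w t]
                            heat_solution_has_derivative[OF u(1) v t]] \<open>u v t > 0\<close>
      by (simp add: L_def)
    show "(psi has_real_derivative deriv psi (q w)) (at (u w t / u v t))"
      using psi \<open>u w t > 0\<close> \<open>u v t > 0\<close>
      by (simp add: q_def DERIV_deriv_iff_real_differentiable)
  qed
  have "((\<lambda>s. lap_psi V E psi (\<lambda>y. u y s) v) has_real_derivative
               lap V E (\<lambda>w. deriv psi (q w) * q' w) v) (at t within {0..})"
    unfolding lap_psi_def lap_def by (rule DERIV_sum, rule DERIV_diff) (use dpsi v in blast)+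
  then show ?thesis by (simp add: Omega_psi_def q'_def q_def L_def mult.assoc)
qed

text \<open>No finiteness is needed: a sum over an infinite neighbourhood is 0 on both sides.\<close>

lemma heat_op_lap_psi_eq_Gamma2_psi:
  assumes psi: "\<forall>x>0. psi differentiable (at x)"
    and u: "heat_solution V E u" "\<forall>v\<in>V. \<forall>t\<ge>0. u v t > 0"
    and t: "t \<ge> 0" and v: "v \<in> V"
  shows "heat_op V E (\<lambda>x s. - u x s * lap_psi V E psi (\<lambda>y. u y s) x) v t
       = 2 * u v t * Gamma2_psi V E psi (\<lambda>y. u y t) v"
proof -
  define f where "f = (\<lambda>y. u y t)"
  have "u v t > 0" using u(2) v t by auto
  have "((\<lambda>s. - u v s * lap_psi V E psi (\<lambda>y. u y s) v) has_real_derivative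
          - (lap V E f v * lap_psi V E psi f v + f v * Omega_psi V E psi f v)) (at t within {0..})"
    using DERIV_minus[OF DERIV_mult[OF heat_solution_has_derivative[OF u(1) v t]
                                      lap_psi_has_derivative_Omega_psi[OF psi u t v]]]
    by (simp add: f_def algebra_simps)
  then have dt_eq: "dt (\<lambda>x s. - u x s * lap_psi V E psi (\<lambda>y. u y s) x) v t
               = - (lap V E f v * lap_psi V E psi f v + f v * Omega_psi V E psi f v)"
    using t by (intro dt_eqI) simp_all
  have "heat_op V E (\<lambda>x s. - u x s * lap_psi V E psi (\<lambda>y. u y s) x) v t
      = - lap V E (\<lambda>x. f x * lap_psi V E psi f x) v
        + (lap V E f v * lap_psi V E psi f v + f v * Omega_psi V E psi f v)"
    unfolding heat_op_def dt_eq using lap_uminus[of V E "\<lambda>x. f x * lap_psi V E psi f x" v]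
    by (simp add: f_def)
  also have "\<dots> = 2 * u v t * Gamma2_psi V E psi f v"
    using \<open>u v t > 0\<close> by (simp add: Gamma2_psi_def f_def field_simps)
  finally show ?thesis by (simp add: f_def)
qed

lemma heat_op_lap_psi_ge_iff:
  assumes psi: "\<forall>x>0. psi differentiable (at x)"
    and u: "heat_solution V E u" "\<forall>v\<in>V. \<forall>t\<ge>0. u v t > 0"
    and "d > 0" and t: "t \<ge> 0" and v: "v \<in> V"
  shows "heat_op V E (\<lambda>x s. - u x s * lap_psi V E psi (\<lambda>y. u y s) x) v t
           \<ge> 2 / d * u v t * (lap_psi V E psi (\<lambda>y. u y t) v)\<^sup>2
     \<longleftrightarrow> Gamma2_psi V E psi (\<lambda>y. u y t) v \<ge> (lap_psi V E psi (\<lambda>y. u y t) v)\<^sup>2 / d"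
proof -
  have "u v t > 0" using u(2) t v by blast
  with \<open>d > 0\<close> show ?thesis
    unfolding heat_op_lap_psi_eq_Gamma2_psi[OF psi u t v] by (simp add: field_simps)
qed

definition shifted_lap :: "'a set \<Rightarrow> ('a \<Rightarrow> 'a \<Rightarrow> bool) \<Rightarrow> real \<Rightarrow> ('a \<Rightarrow> real) \<Rightarrow> 'a \<Rightarrow> real" where
  "shifted_lap V E k g v = lap V E g v + k * g v"

definition exp_shifted_lap :: "'a set \<Rightarrow> ('a \<Rightarrow> 'a \<Rightarrow> bool) \<Rightarrow> real \<Rightarrow> ('a \<Rightarrow> real) \<Rightarrow> 'a \<Rightarrow> real \<Rightarrow> real" where
  "exp_shifted_lap V E k f w t = (\<Sum>n. (shifted_lap V E k ^^ n) f w / fact n * t ^ n)"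

definition heat_flow :: "'a set \<Rightarrow> ('a \<Rightarrow> 'a \<Rightarrow> bool) \<Rightarrow> ('a \<Rightarrow> real) \<Rightarrow> 'a \<Rightarrow> real \<Rightarrow> real" where
  "heat_flow V E f w t = exp (- real (card V) * t) * exp_shifted_lap V E (card V) f w t"

lemma shifted_lap_nonneg:
  assumes "finite V" "real (card V) \<le> k" "\<forall>w\<in>V. g w \<ge> 0" "v \<in> V"
  shows "shifted_lap V E k g v \<ge> 0"
proof -
  have "real (card {w\<in>V. E v w}) \<le> k"
    using assms(1,2) card_mono[of V "{w\<in>V. E v w}"] by auto
  then have "(k - real (card {w\<in>V. E v w})) * g v \<ge> 0" using assms(3,4) by auto
  moreover have "(\<Sum>w\<in>{w\<in>V. E v w}. g w) \<ge> 0" using assms(3) by (auto intro: sum_nonneg)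
  ultimately show ?thesis
    unfolding shifted_lap_def lap_eq_sum_minus_degree by (simp add: algebra_simps)
qed

lemma shifted_lap_power_nonneg:
  assumes "finite V" "real (card V) \<le> k" "\<forall>w\<in>V. f w \<ge> 0" "v \<in> V"
  shows "(shifted_lap V E k ^^ n) f v \<ge> 0"
  using assms(4)
proof (induction n arbitrary: v)
  case (Suc n)
  then show ?case using shifted_lap_nonneg[OF assms(1,2)] by simp
qed (use assms(3) in simp)

lemma shifted_lap_power_abs_le:
  assumes "finite V" "k \<ge> 0" "\<forall>w\<in>V. \<bar>f w\<bar> \<le> M" "v \<in> V"
  shows "\<bar>(shifted_lap V E k ^^ n) f v\<bar> \<le> (2 * real (card V) + k) ^ n * M"
  using assms(4)
proof (induction n arbitrary: v)
  case (Suc n)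
  let ?B = "(2 * real (card V) + k) ^ n * M"
  have "\<bar>lap V E ((shifted_lap V E k ^^ n) f) v\<bar> \<le> 2 * real (card V) * ?B"
    using lap_abs_le[OF assms(1) _ Suc.prems] Suc.IH by blast
  moreover have "\<bar>k * (shifted_lap V E k ^^ n) f v\<bar> \<le> k * ?B"
    using Suc assms(2) by (simp add: abs_mult mult_left_mono)
  moreover have "\<bar>shifted_lap V E k ((shifted_lap V E k ^^ n) f) v\<bar>
      \<le> \<bar>lap V E ((shifted_lap V E k ^^ n) f) v\<bar> + \<bar>k * (shifted_lap V E k ^^ n) f v\<bar>"
    unfolding shifted_lap_def by (rule abs_triangle_ineq)
  ultimately show ?case by (simp add: algebra_simps)
qed (use assms(3) in simp)

lemma summable_exp_shifted_lap:
  assumes "finite V" "k \<ge> 0" "w \<in> V"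
  shows "summable (\<lambda>n. (shifted_lap V E k ^^ n) f w / fact n * x ^ n)"
proof (rule summable_comparison_test')
  define M where "M = (\<Sum>v\<in>V. \<bar>f v\<bar>)"
  define C where "C = 2 * real (card V) + k"
  show "summable (\<lambda>n. M * (inverse (fact n) * (C * \<bar>x\<bar>) ^ n))"
    by (intro summable_mult summable_exp)
  fix n :: nat
  have "\<forall>v\<in>V. \<bar>f v\<bar> \<le> M"
    unfolding M_def using assms(1) by (auto intro: member_le_sum[where f = "\<lambda>v. \<bar>f v\<bar>"])
  then have "\<bar>(shifted_lap V E k ^^ n) f w\<bar> \<le> C ^ n * M"
    unfolding C_def by (rule shifted_lap_power_abs_le[OF assms(1,2) _ assms(3)])
  then have "\<bar>(shifted_lap V E k ^^ n) f w\<bar> * \<bar>x\<bar> ^ n / fact n \<le> C ^ n * M * \<bar>x\<bar> ^ n / fact n"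
    by (intro divide_right_mono mult_right_mono) auto
  then show "norm ((shifted_lap V E k ^^ n) f w / fact n * x ^ n)
               \<le> M * (inverse (fact n) * (C * \<bar>x\<bar>) ^ n)"
    by (simp add: abs_mult power_abs power_mult_distrib field_simps)
qed

lemma exp_shifted_lap_has_derivative:
  assumes "finite V" "k \<ge> 0" "v \<in> V"
  shows "(exp_shifted_lap V E k f v has_real_derivative
            shifted_lap V E k (\<lambda>w. exp_shifted_lap V E k f w x) v) (at x)"
proof -
  define P where "P n = (shifted_lap V E k ^^ n) f" for n
  have summ: "summable (\<lambda>n. P n w / fact n * x ^ n)" if "w \<in> V" for w x
    unfolding P_def using summable_exp_shifted_lap[OF assms(1,2) that] .
  have diffs_eq: "diffs (\<lambda>n. P n v / fact n) n * x ^ n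
      = lap V E (\<lambda>w. P n w / fact n * x ^ n) v + k * (P n v / fact n * x ^ n)" for n
  proof -
    have "of_nat (Suc n) * (Q / fact (Suc n)) = Q / (fact n :: real)" for Q
      by (simp add: fact_Suc divide_simps del: of_nat_Suc)
    then have diffs: "diffs (\<lambda>n. P n v / fact n) n = shifted_lap V E k (P n) v / fact n"
      by (simp add: diffs_def P_def)
    have lap: "lap V E (\<lambda>w. P n w / fact n * x ^ n) v = x ^ n / fact n * lap V E (P n) v"
      using lap_cmult[of V E "x ^ n / fact n" "P n" v] by (simp add: algebra_simps)
    show ?thesis unfolding diffs lap by (simp add: shifted_lap_def field_simps)
  qed
  have "(\<lambda>n. lap V E (\<lambda>w. P n w / fact n * x ^ n) v) sums
          lap V E (\<lambda>w. exp_shifted_lap V E k f w x) v"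
    by (rule lap_sums[OF _ assms(3)])
       (use summ in \<open>auto simp: exp_shifted_lap_def P_def intro: summable_sums\<close>)
  moreover have "(\<lambda>n. k * (P n v / fact n * x ^ n)) sums (k * exp_shifted_lap V E k f v x)"
    unfolding exp_shifted_lap_def P_def[symmetric] by (intro sums_mult summable_sums summ assms(3))
  ultimately have "(\<lambda>n. diffs (\<lambda>n. P n v / fact n) n * x ^ n) sums
                     shifted_lap V E k (\<lambda>w. exp_shifted_lap V E k f w x) v"
    unfolding diffs_eq shifted_lap_def by (rule sums_add)
  moreover have "(exp_shifted_lap V E k f v has_real_derivative
                   (\<Sum>n. diffs (\<lambda>n. P n v / fact n) n * x ^ n)) (at x)"
    unfolding exp_shifted_lap_def[abs_def] P_def[symmetric]
    by (rule termdiffs_strong_converges_everywhere) (use summ assms(3) in auto)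
  ultimately show ?thesis by (simp add: sums_unique[symmetric])
qed

lemma heat_flow_has_derivative:
  assumes "finite V" "v \<in> V"
  shows "(heat_flow V E f v has_real_derivative lap V E (\<lambda>w. heat_flow V E f w t) v) (at t)"
proof -
  let ?k = "real (card V)"
  have "((\<lambda>t. exp (- ?k * t)) has_real_derivative exp (- ?k * t) * (- ?k)) (at t)"
    by (auto intro!: derivative_eq_intros)
  moreover have "(exp_shifted_lap V E ?k f v has_real_derivative
                   shifted_lap V E ?k (\<lambda>w. exp_shifted_lap V E ?k f w t) v) (at t)"
    by (rule exp_shifted_lap_has_derivative[OF assms(1) _ assms(2)]) simp
  ultimately have "((\<lambda>t. exp (- ?k * t) * exp_shifted_lap V E ?k f v t) has_real_derivative
      exp (- ?k * t) * shifted_lap V E ?k (\<lambda>w. exp_shifted_lap V E ?k f w t) v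
      + exp (- ?k * t) * (- ?k) * exp_shifted_lap V E ?k f v t) (at t)"
    by (rule DERIV_mult')
  moreover have "lap V E (\<lambda>w. heat_flow V E f w t) v
                   = exp (- ?k * t) * lap V E (\<lambda>w. exp_shifted_lap V E ?k f w t) v"
    unfolding heat_flow_def by (rule lap_cmult)
  ultimately show ?thesis
    unfolding heat_flow_def[abs_def] shifted_lap_def by (simp add: algebra_simps)
qed

lemma heat_solution_heat_flow:
  assumes "finite V"
  shows "heat_solution V E (heat_flow V E f)"
  unfolding heat_solution_def
proof
  fix v assume v: "v \<in> V"
  have deriv: "(heat_flow V E f v has_real_derivative lap V E (\<lambda>w. heat_flow V E f w t) v)
                 (at t within {0..})" for t
    by (rule has_field_derivative_at_within[OF heat_flow_has_derivative[OF assms v]])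
  have dt_eq: "dt (heat_flow V E f) v t = lap V E (\<lambda>w. heat_flow V E f w t) v" if "t \<in> {0..}" for t
    using dt_eqI[of "heat_flow V E f" v, OF deriv] that by simp
  have cont: "continuous_on X (heat_flow V E f w)" if "w \<in> V" for w X
    by (rule DERIV_continuous_on, rule has_field_derivative_at_within,
        rule heat_flow_has_derivative[OF assms that])
  have "continuous_on {0..} (\<lambda>t. lap V E (\<lambda>w. heat_flow V E f w t) v)"
    unfolding lap_def by (intro continuous_on_sum continuous_on_diff cont v) auto
  then have "continuous_on {0..} (dt (heat_flow V E f) v)"
    by (subst continuous_on_cong[OF refl dt_eq])
  then show "(\<forall>t\<ge>0. (heat_flow V E f v has_real_derivative dt (heat_flow V E f) v t) (at t within {0..}))
    \<and> continuous_on {0..} (dt (heat_flow V E f) v) \<and> (\<forall>t\<ge>0. heat_op V E (heat_flow V E f) v t = 0)"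
    using deriv dt_eq by (simp add: heat_op_def)
qed

lemma heat_flow_at_zero: "heat_flow V E f w 0 = f w"
proof -
  have "exp_shifted_lap V E k f w 0 = f w" for k
    unfolding exp_shifted_lap_def powser_zero by simp
  then show ?thesis by (simp add: heat_flow_def)
qed

lemma heat_flow_pos:
  assumes "finite V" "\<forall>w\<in>V. f w > 0" "v \<in> V" "t \<ge> 0"
  shows "heat_flow V E f v t > 0"
proof -
  have "f v = (\<Sum>n\<in>{0}. (shifted_lap V E (card V) ^^ n) f v / fact n * t ^ n)" by simp
  also have "\<dots> \<le> exp_shifted_lap V E (card V) f v t"
    unfolding exp_shifted_lap_def
    using summable_exp_shifted_lap[OF assms(1) _ assms(3)]
      shifted_lap_power_nonneg[OF assms(1) order_refl _ assms(3)] assms(2,4)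
    by (intro sum_le_suminf) (auto simp: less_imp_le)
  finally have "exp_shifted_lap V E (card V) f v t > 0"
    using assms(2,3) less_le_trans by blast
  then show ?thesis by (simp add: heat_flow_def)
qed

theorem mainTheorem2:
  fixes V :: "'a set" and E :: "'a \<Rightarrow> 'a \<Rightarrow> bool" and psi :: "real \<Rightarrow> real" and d :: real
  assumes "finite_graph V E"
    and "\<forall>x>0. psi differentiable (at x)"
    and "continuous_on {0<..} (deriv psi)"
    and "d > 0"
  shows "CD_psi V E psi d \<longleftrightarrow>
    (\<forall>u. heat_solution V E u \<and> (\<forall>v\<in>V. \<forall>t\<ge>0. u v t > 0) \<longrightarrow>
      (\<forall>t\<ge>0. \<forall>v\<in>V.
         heat_op V E (\<lambda>x s. - u x s * lap_psi V E psi (\<lambda>y. u y s) x) v t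
           \<ge> 2 / d * u v t * (lap_psi V E psi (\<lambda>y. u y t) v)\<^sup>2))"
    (is "_ \<longleftrightarrow> (\<forall>u. ?pos_sol u \<longrightarrow> ?ineq u)")
proof -
  have finV: "finite V" using assms(1) by (simp add: finite_graph_def)
  note ge_iff = heat_op_lap_psi_ge_iff[OF assms(2) _ _ assms(4)]
  show ?thesis
  proof
    assume CD: "CD_psi V E psi d"
    show "\<forall>u. ?pos_sol u \<longrightarrow> ?ineq u"
    proof (intro allI impI ballI)
      fix u and t :: real and v assume u: "?pos_sol u" and "t \<ge> 0" "v \<in> V"
      with CD show "heat_op V E (\<lambda>x s. - u x s * lap_psi V E psi (\<lambda>y. u y s) x) v t
                      \<ge> 2 / d * u v t * (lap_psi V E psi (\<lambda>y. u y t) v)\<^sup>2"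
        unfolding ge_iff[OF u[THEN conjunct1] u[THEN conjunct2] \<open>t \<ge> 0\<close> \<open>v \<in> V\<close>]
        by (auto simp: CD_psi_def)
    qed
  next
    assume heat_ineq: "\<forall>u. ?pos_sol u \<longrightarrow> ?ineq u"
    show "CD_psi V E psi d"
      unfolding CD_psi_def
    proof (intro allI impI ballI)
      fix f :: "'a \<Rightarrow> real" and v assume f: "\<forall>v\<in>V. f v > 0" and v: "v \<in> V"
      have flow: "heat_solution V E (heat_flow V E f)" "\<forall>v\<in>V. \<forall>t\<ge>0. heat_flow V E f v t > 0"
        using heat_solution_heat_flow[OF finV] heat_flow_pos[OF finV f] by blast+
      then have "?ineq (heat_flow V E f)" using heat_ineq by blast
      from this[rule_format, OF order_refl v] ge_iff[OF flow order_refl v]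
      show "Gamma2_psi V E psi f v \<ge> (lap_psi V E psi f v)\<^sup>2 / d"
        by (simp add: heat_flow_at_zero)
    qed
  qed
qed

end
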